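(* Let $n\ge3$, $i\ge0$, $1\le k\le n$, and suppose $\mathcal{L}_i\cap\mathcal{B}_k\neq\emptyset$. Then $\mathcal{L}_i\cap\mathcal{B}_k$ contains at most one element of the form $x_1^t\partial_k$ (with $t\ge0$ an integer). If it contains such an element, then this element is the unique element of minimum weight-degree $\mathrm{WD}$ in $\mathcal{L}_i\cap\mathcal{B}_k$, and its exponent is $t=i-h_i(n-k)+1$.
   Context: Fix an integer $n\ge 3$. A partition is a sequence $\Lambda=(\lambda_j)_{j\ge1}$ of non-negative integers with finite support; $\mathrm{wt}(\Lambda)=\sum_j j\lambda_j$; $\mathrm{Part}(k)$ is the set of partitions with $\lambda_j=0$ for $j>k$. Write $x^\Lambda=\prod_j x_j^{\lambda_j}$, $\deg(x^\Lambda)=\sum_j\lambda_j$. $\mathcal{B}=\{x^\Lambda\partial_k : 1\le k\le n,\ \Lambda\in\mathrm{Part}(k-1)\}$ and $\mathcal{B}_u=\{x^\Lambda\partial_k\in\mathcal{B}: k=u\}$. For an integer $i\ge-1$, let $r_i\in\{1,\dots,n-1\}$ with $i\equiv r_i\pmod{n-1}$ and $h_i=\lfloor (i-1)/(n-1)\rfloor+1$. The weight-degree is $\mathrm{WD}(x^\Lambda\partial_k)=\mathrm{wt}(\Lambda)-\deg(x^\Lambda)+n-k$, and $\mathrm{lev}_i(x^\Lambda\partial_k)=h_i\,\mathrm{WD}(x^\Lambda\partial_k)+\deg(x^\Lambda)-1$. For $i\ge-1$, $\mathcal{N}_i=\{b\in\mathcal{B}: \mathrm{lev}_j(b)\le j\text{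 for some integer } -1\le j\le i\}$, and $\mathcal{L}_i=\mathcal{N}_i\setminus\mathcal{N}_{i-1}$ for $i\ge0$. *)

theory Defs
  imports Main
begin

text \<open>A partition is a finitely supported function nat => nat; index 0 is unused
  and required to be 0. A basis element x^Lambda d_k is the pair (Lambda, k).\<close>

type_synonym partition = "nat \<Rightarrow> nat"

definition Part :: "nat \<Rightarrow> partition set" where
  "Part m = {L. \<forall>j. (j = 0 \<or> m < j) \<longrightarrow> L j = 0}"

definition wt :: "partition \<Rightarrow> nat" where
  "wt L = (\<Sum>j\<in>{j. L j \<noteq> 0}. j * L j)"

definition pdeg :: "partition \<Rightarrow> nat" where
  "pdeg L = (\<Sum>j\<in>{j. L j \<noteq> 0}. L j)"

definition Bas :: "nat \<Rightarrow> (partition \<times> nat) set" where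
  "Bas n = {(L, k). 1 \<le> k \<and> k \<le> n \<and> L \<in> Part (k - 1)}"

definition Bas_u :: "nat \<Rightarrow> nat \<Rightarrow> (partition \<times> nat) set" where
  "Bas_u n u = {b \<in> Bas n. snd b = u}"

definition hh :: "nat \<Rightarrow> int \<Rightarrow> int" where
  "hh n i = (i - 1) div (int n - 1) + 1"

definition WD :: "nat \<Rightarrow> partition \<times> nat \<Rightarrow> int" where
  "WD n b = int (wt (fst b)) - int (pdeg (fst b)) + int n - int (snd b)"

definition lev :: "nat \<Rightarrow> int \<Rightarrow> partition \<times> nat \<Rightarrow> int" where
  "lev n i b = hh n i * WD n b + int (pdeg (fst b)) - 1"

definition NN :: "nat \<Rightarrow> int \<Rightarrow> (partition \<times> nat) set" where
  "NN n i = {b \<in> Bas n. \<exists>j. -1 \<le> j \<and> j \<le> i \<and> lev n j b \<le> j}"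

definition LL :: "nat \<Rightarrow> int \<Rightarrow> (partition \<times> nat) set" where
  "LL n i = NN n i - NN n (i - 1)"

definition x1pow :: "nat \<Rightarrow> partition" where
  "x1pow t = (\<lambda>j. if j = 1 then t else 0)"

end

theory Submission
  imports Defs
begin

text \<open>For b = x_1^t \<partial>_k the weight-degree is n - k whatever t is, while every other element
  of B_k has strictly larger weight-degree, since wt exceeds deg as soon as some x_j with
  j >= 2 occurs. Membership of b in L_i means lev_i(b) <= i while lev_(i-1)(b) > i - 1. For
  b = x_1^t \<partial>_k the level h_j (n - k) + t - 1 is monotone in j, so these two inequalities
  force lev_i(b) = i, which determines t.\<close>

lemma support_x1pow: "{j. x1pow t j \<noteq> 0} = (if t = 0 then {} else {1})"
  by (auto simp: x1pow_def)

lemma wt_x1pow [simp]: "wt (x1pow t) = t"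
  unfolding wt_def support_x1pow by (simp add: x1pow_def)

lemma pdeg_x1pow [simp]: "pdeg (x1pow t) = t"
  unfolding pdeg_def support_x1pow by (simp add: x1pow_def)

lemma WD_x1pow: "WD n (x1pow t, k) = int n - int k"
  by (simp add: WD_def)

lemma lev_x1pow: "lev n j (x1pow t, k) = hh n j * (int n - int k) + int t - 1"
  by (simp add: lev_def WD_def)

lemma Part_support:
  assumes "L \<in> Part m" and "L j \<noteq> 0"
  shows "j \<in> {1..m}"
proof -
  have "\<forall>j. (j = 0 \<or> m < j) \<longrightarrow> L j = 0"
    using assms(1) by (simp add: Part_def)
  with assms(2) have "\<not> (j = 0 \<or> m < j)"
    by metis
  then show ?thesis
    by simp
qed

lemma pdeg_less_wt:
  assumes "L \<in> Part m" and "L \<noteq> x1pow (L 1)"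
  shows "pdeg L < wt L"
proof -
  let ?S = "{j. L j \<noteq> 0}"
  have S_sub: "?S \<subseteq> {1..m}"
    using Part_support[OF assms(1)] by blast
  then have fin: "finite ?S"
    by (rule finite_subset) simp
  obtain j where j: "L j \<noteq> x1pow (L 1) j"
    using assms(2) by blast
  have "L 0 = 0"
    using assms(1) by (simp add: Part_def)
  with j have "j \<noteq> 0"
    by (cases "j = 0") (simp_all add: x1pow_def)
  moreover from j have "j \<noteq> 1"
    by (cases "j = 1") (simp_all add: x1pow_def)
  ultimately have "j \<ge> 2" and "L j \<noteq> 0"
    using j by (auto simp: x1pow_def)
  then have "L j < j * L j"
    by simp
  moreover have "j \<in> ?S"
    using \<open>L j \<noteq> 0\<close> by simp
  moreover have "\<forall>x\<in>?S. L x \<le> x * L x"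
    using S_sub by auto
  ultimately have "(\<Sum>x\<in>?S. L x) < (\<Sum>x\<in>?S. x * L x)"
    by (intro sum_strict_mono_ex1[OF fin]) auto
  then show ?thesis
    by (simp add: wt_def pdeg_def)
qed

lemma WD_x1pow_less:
  assumes "L \<in> Part m" and "L \<noteq> x1pow (L 1)"
  shows "WD n (x1pow t, k) < WD n (L, k)"
  using pdeg_less_wt[OF assms] by (simp add: WD_def)

lemma mem_Bas_u_iff: "(L, u) \<in> Bas_u n k \<longleftrightarrow> u = k \<and> 1 \<le> k \<and> k \<le> n \<and> L \<in> Part (k - 1)"
  by (auto simp: Bas_u_def Bas_def)

lemma hh_mono:
  assumes "n \<ge> 2" and "a \<le> b"
  shows "hh n a \<le> hh n b"
  using assms by (simp add: hh_def zdiv_mono1)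

lemma lev_gt_if_mem_LL:
  assumes "b \<in> LL n i" and "-1 \<le> j" and "j < i"
  shows "j < lev n j b"
proof -
  have "b \<in> Bas n" and "b \<notin> NN n (i - 1)"
    using assms(1) by (auto simp: LL_def NN_def)
  then show ?thesis
    using assms(2,3) by (auto simp: NN_def not_le)
qed

lemma lev_le_if_mem_LL:
  assumes "b \<in> LL n i"
  shows "lev n i b \<le> i"
proof -
  obtain j where "-1 \<le> j" "j \<le> i" "lev n j b \<le> j"
    using assms by (auto simp: LL_def NN_def)
  moreover from calculation have "\<not> j < i"
    using lev_gt_if_mem_LL[OF assms] by force
  ultimately show ?thesis
    by simp
qed

lemma x1pow_exponent_if_mem_LL:
  assumes "n \<ge> 2" and "i \<ge> 0" and "k \<le> n" and mem: "(x1pow t, k) \<in> LL n i"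
  shows "int t = i - hh n i * (int n - int k) + 1"
proof -
  have "hh n (i - 1) * (int n - int k) \<le> hh n i * (int n - int k)"
    using assms by (intro mult_right_mono hh_mono) auto
  moreover have "hh n i * (int n - int k) + int t - 1 \<le> i"
    using lev_le_if_mem_LL[OF mem] by (simp add: lev_x1pow)
  moreover have "hh n (i - 1) * (int n - int k) + int t - 1 > i - 1"
    using lev_gt_if_mem_LL[OF mem, of "i - 1"] \<open>i \<ge> 0\<close> by (simp add: lev_x1pow)
  ultimately show ?thesis
    by linarith
qed

theorem proposition2p14:
  fixes n k :: nat and i :: int
  assumes "n \<ge> 3" and "i \<ge> 0" and "1 \<le> k" and "k \<le> n"
    and "LL n i \<inter> Bas_u n k \<noteq> {}"
  shows "(\<forall>t1 t2. (x1pow t1, k) \<in> LL n i \<inter> Bas_u n k \<and> (x1pow t2, k) \<in> LL n i \<inter> Bas_u n k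
            \<longrightarrow> t1 = t2)
       \<and> (\<forall>t. (x1pow t, k) \<in> LL n i \<inter> Bas_u n k \<longrightarrow>
            (\<forall>b \<in> LL n i \<inter> Bas_u n k. b \<noteq> (x1pow t, k) \<longrightarrow> WD n (x1pow t, k) < WD n b)
            \<and> int t = i - hh n i * (int n - int k) + 1)"
proof -
  have exponent: "int t = i - hh n i * (int n - int k) + 1" if "(x1pow t, k) \<in> LL n i" for t
    using x1pow_exponent_if_mem_LL[OF _ \<open>i \<ge> 0\<close> \<open>k \<le> n\<close> that] \<open>n \<ge> 3\<close> by simp
  have unique: "t1 = t2" if "(x1pow t1, k) \<in> LL n i" and "(x1pow t2, k) \<in> LL n i" for t1 t2
    using exponent[OF that(1)] exponent[OF that(2)] by simp
  have WD_min: "WD n (x1pow t, k) < WD n (L, u)"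
    if "(x1pow t, k) \<in> LL n i" and "(L, u) \<in> LL n i \<inter> Bas_u n k" and "(L, u) \<noteq> (x1pow t, k)"
    for t L u
  proof -
    have "u = k" and "L \<in> Part (k - 1)"
      using that(2) by (simp_all add: mem_Bas_u_iff)
    moreover have "L \<noteq> x1pow (L 1)"
      using that unique \<open>u = k\<close> by (metis IntD1)
    ultimately show ?thesis
      by (simp add: WD_x1pow_less)
  qed
  show ?thesis
    using exponent unique WD_min by fast
qed

end
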